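(* Fix an iteration $t$, an agent $p$, and a realization $\xi\in\mathbb{R}^{J\times K}$ of the noise. Let $w^{t+1},\lambda^t_p,z^t_p\in\mathbb{R}^{J\times K}$, $\rho^t>0$, $\eta^t>0$ be given, and set $$\Phi(z)=\langle f'_p(z^t_p;\mathcal{D}_p),z\rangle+\tfrac{\rho^t}{2}\big\|w^{t+1}-z+\tfrac1{\rho^t}(\lambda^t_p-\xi)\big\|^2+\tfrac1{2\eta^t}\|z-z^t_p\|^2 .$$ Let $z^{t+1}_p(\mathcal{D}_p)=\operatorname{argmin}_{z\in\mathcal{W}}\Phi(z)$ and, for $\ell>0$, $z^{t+1}_p(\ell,\mathcal{D}_p)=\operatorname{argmin}_{z\in\mathbb{R}^{J\times K}}\Phi(z)+\sum_{m=1}^M\ln(1+e^{\ell h_m(z)})$. Then $\lim_{\ell\to\infty}z^{t+1}_p(\ell,\mathcal{D}_p)=z^{t+1}_p(\mathcal{D}_p)$.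
   Context: $\mathbb{R}^{J\times K}$ carries the Frobenius inner product and norm. $\mathcal{D}_p$ is a dataset, $f_p(\cdot;\mathcal{D}_p)$ a convex function on $\mathbb{R}^{J\times K}$ (the local empirical risk $\frac1I\sum_{i}\varphi(z;x_{pi},y_{pi})+\frac\beta Pr(z)$ with convex loss $\varphi$, convex regularizer $r$, $\beta>0$), and $f'_p(z^t_p;\mathcal{D}_p)$ a subgradient of it at $z^t_p$. $\mathcal{W}\subset\mathbb{R}^{J\times K}$ is compact convex with $\mathcal{W}=\{z:h_m(z)\le0,\ m\in[M]\}$, each $h_m$ convex and twice continuously differentiable. Both minimization problems have strongly convex objectives and hence unique minimizers. *)

theory Defs
  imports "HOL-Analysis.Analysis"
begin

text \<open>The matrix space R^{J x K} is rendered as real^'k^'j; its inner product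
  (sum of componentwise products) is the Frobenius inner product.\<close>

definition argmin_on :: "'a set \<Rightarrow> ('a \<Rightarrow> real) \<Rightarrow> 'a" where
  "argmin_on S F = (THE z. z \<in> S \<and> (\<forall>y\<in>S. F z \<le> F y))"

definition twice_cont_diff :: "('a::real_normed_vector \<Rightarrow> real) \<Rightarrow> bool" where
  "twice_cont_diff h \<longleftrightarrow> (\<exists>Dh :: 'a \<Rightarrow> ('a \<Rightarrow>\<^sub>L real). \<exists>D2h :: 'a \<Rightarrow> ('a \<Rightarrow>\<^sub>L ('a \<Rightarrow>\<^sub>L real)).
     (\<forall>x. (h has_derivative blinfun_apply (Dh x)) (at x)) \<and>
     (\<forall>x. (Dh has_derivative blinfun_apply (D2h x)) (at x)) \<and>
     continuous_on UNIV D2h)"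

definition is_subgradient :: "('a::real_inner \<Rightarrow> real) \<Rightarrow> 'a \<Rightarrow> 'a \<Rightarrow> bool" where
  "is_subgradient f x0 g \<longleftrightarrow> (\<forall>z. f x0 + inner g (z - x0) \<le> f z)"

end

theory Submission
  imports Defs
begin

(* The penalized objective Phi + sum_m softplus (l h_m) is strictly convex and coercive, so its
   minimizer z_l exists, is unique and stays in a fixed sublevel set of Phi. Since x <= softplus x,
   the penalty forces h_m z_l <= O(1/l). The delicate point is Phi z_l <= Phi x* + o(1): the penalty
   at the constrained minimizer x* does not vanish (it is ln 2 per active constraint). Instead one
   compares with the points x* + v/l, where the penalty tends to the sum of softplus (Dh_m x* v)
   over the active constraints, S v; by the gradient inequality S (l (z - x* )) bounds the penalty
   at every z from below, so taking v with S v close to inf S gives the bound. Compactness then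
   turns asymptotic feasibility and optimality into convergence to the unique constrained
   minimizer; no constraint qualification is needed. *)

definition softplus :: "real \<Rightarrow> real" where
  "softplus x = ln (1 + exp x)"

lemma softplus_nonneg: "0 \<le> softplus x"
  unfolding softplus_def by (intro ln_ge_zero) simp

lemma softplus_ge: "x \<le> softplus x"
proof -
  have "ln (exp x) \<le> ln (1 + exp x)"
    by (subst ln_le_cancel_iff) (auto simp: add_pos_pos)
  then show ?thesis by (simp add: softplus_def)
qed

lemma softplus_mono: "x \<le> y \<Longrightarrow> softplus x \<le> softplus y"
  unfolding softplus_def by (simp add: add_pos_pos)

lemma softplus_nonpos_le_ln2: "x \<le> 0 \<Longrightarrow> softplus x \<le> ln 2"
  unfolding softplus_def by (simp add: add_pos_pos)

lemma tendsto_softplus [tendsto_intros]: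
  "(f \<longlongrightarrow> a) F \<Longrightarrow> ((\<lambda>x. softplus (f x)) \<longlongrightarrow> softplus a) F"
  unfolding softplus_def
  by (intro tendsto_intros) (metis add_pos_pos exp_gt_zero zero_less_one less_irrefl)+

lemma continuous_on_softplus [continuous_intros]:
  "continuous_on S f \<Longrightarrow> continuous_on S (\<lambda>x. softplus (f x))"
  unfolding softplus_def
  by (intro continuous_intros) (metis add_pos_pos exp_gt_zero zero_less_one less_irrefl)+

lemma softplus_tendsto_0_at_bot:
  assumes "filterlim f at_bot F"
  shows "((\<lambda>x. softplus (f x)) \<longlongrightarrow> 0) F"
proof -
  have "((\<lambda>x. exp (f x)) \<longlongrightarrow> 0) F"
    using filterlim_compose[OF exp_at_bot assms] .
  then have "((\<lambda>x. ln (1 + exp (f x))) \<longlongrightarrow> ln (1 + 0)) F"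
    by (intro tendsto_intros) auto
  then show ?thesis by (simp add: softplus_def)
qed

lemma softplus_midpoint_le: "softplus ((x + y) / 2) \<le> (softplus x + softplus y) / 2"
proof -
  define a b where "a = exp (x / 2)" and "b = exp (y / 2)"
  have exps: "exp x = a\<^sup>2" "exp y = b\<^sup>2" "exp ((x + y) / 2) = a * b"
    unfolding a_def b_def by (simp_all add: power2_eq_square add_divide_distrib flip: exp_add)
  have pos: "0 < a" "0 < b" unfolding a_def b_def by simp_all
  have "(1 + a\<^sup>2) * (1 + b\<^sup>2) - (1 + a * b)\<^sup>2 = (a - b)\<^sup>2"
    by (simp add: power2_eq_square algebra_simps)
  then have "(1 + a * b)\<^sup>2 \<le> (1 + a\<^sup>2) * (1 + b\<^sup>2)"
    using zero_le_power2[of "a - b"] by linarith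
  moreover have "0 < 1 + a * b" "0 < 1 + a\<^sup>2" "0 < 1 + b\<^sup>2"
    using pos by (auto intro: add_pos_nonneg)
  ultimately have "ln ((1 + a * b)\<^sup>2) \<le> ln ((1 + a\<^sup>2) * (1 + b\<^sup>2))"
    by (subst ln_le_cancel_iff) auto
  then have "2 * ln (1 + a * b) \<le> ln (1 + a\<^sup>2) + ln (1 + b\<^sup>2)"
    using \<open>0 < 1 + a * b\<close> \<open>0 < 1 + a\<^sup>2\<close> \<open>0 < 1 + b\<^sup>2\<close> by (simp add: ln_mult ln_realpow)
  then show ?thesis unfolding softplus_def exps by simp
qed

definition strictly_midpoint_convex :: "('a::real_vector \<Rightarrow> real) \<Rightarrow> bool" where
  "strictly_midpoint_convex G \<longleftrightarrow> (\<forall>a b. a \<noteq> b \<longrightarrow> G (midpoint a b) < (G a + G b) / 2)"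

lemma midpoint_in_convex: "convex S \<Longrightarrow> a \<in> S \<Longrightarrow> b \<in> S \<Longrightarrow> midpoint a b \<in> S"
  using midpoint_in_closed_segment closed_segment_subset by blast

lemma strictly_midpoint_convex_min_unique:
  assumes "strictly_midpoint_convex G" "convex S" "z \<in> S" "\<And>y. y \<in> S \<Longrightarrow> G z \<le> G y"
    and "k \<in> S" "G k \<le> G z"
  shows "k = z"
proof (rule ccontr)
  assume "k \<noteq> z"
  then have "G (midpoint k z) < (G k + G z) / 2"
    using assms(1) unfolding strictly_midpoint_convex_def by blast
  moreover have "G z \<le> G (midpoint k z)"
    using assms by (simp add: midpoint_in_convex)
  ultimately show False using assms(6) by argo
qed

lemma argmin_on_eqI:
  assumes "strictly_midpoint_convex G" "convex S" "z \<in> S" "\<And>y. y \<in> S \<Longrightarrow> G z \<le> G y"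
  shows "argmin_on S G = z"
  unfolding argmin_on_def
  by (rule the_equality) (use assms strictly_midpoint_convex_min_unique[OF assms] in force)+

lemma continuous_attains_inf_sublevel:
  fixes G :: "'a::heine_borel \<Rightarrow> real"
  assumes "continuous_on UNIV G" "closed S" "z\<^sub>0 \<in> S" "bounded {z. G z \<le> G z\<^sub>0}"
  obtains z where "z \<in> S" "\<And>y. y \<in> S \<Longrightarrow> G z \<le> G y"
proof -
  let ?K = "S \<inter> {z. G z \<le> G z\<^sub>0}"
  have "compact ?K"
    using assms closed_Collect_le[OF assms(1) continuous_on_const] unfolding compact_eq_bounded_closed
    by (auto intro: bounded_subset)
  moreover have "?K \<noteq> {}" using assms(3) by blast
  ultimately obtain z where "z \<in> ?K" "\<And>y. y \<in> ?K \<Longrightarrow> G z \<le> G y"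
    using continuous_attains_inf continuous_on_subset[OF assms(1)] by (metis subset_UNIV)
  then show thesis by (intro that) force+
qed

lemma linear_plus_squared_dists_eq:
  fixes g u v z :: "'a::real_inner"
  shows "inner g z + a * (norm (u - z))\<^sup>2 + b * (norm (z - v))\<^sup>2
    = (a + b) * (norm z)\<^sup>2 + inner (g - (2 * a) *\<^sub>R u - (2 * b) *\<^sub>R v) z + (a * (norm u)\<^sup>2 + b * (norm v)\<^sup>2)"
  by (simp add: power2_norm_eq_inner inner_diff_left inner_diff_right inner_commute algebra_simps)

lemma proximal_objective_quadratic:
  fixes g w lam z\<^sub>t \<xi> :: "'a::real_inner"
  assumes "\<rho> > 0" "\<eta> > 0"
  obtains c p k where "c > 0"
    and "(\<lambda>z. inner g z + \<rho> / 2 * (norm (w - z + (1 / \<rho>) *\<^sub>R (lam - \<xi>)))\<^sup>2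
          + 1 / (2 * \<eta>) * (norm (z - z\<^sub>t))\<^sup>2)
      = (\<lambda>z. c * (norm z)\<^sup>2 + inner p z + k)"
proof
  define u where "u = w + (1 / \<rho>) *\<^sub>R (lam - \<xi>)"
  show "\<rho> / 2 + 1 / (2 * \<eta>) > 0"
    using assms by (simp add: add_pos_pos)
  show "(\<lambda>z. inner g z + \<rho> / 2 * (norm (w - z + (1 / \<rho>) *\<^sub>R (lam - \<xi>)))\<^sup>2
          + 1 / (2 * \<eta>) * (norm (z - z\<^sub>t))\<^sup>2)
      = (\<lambda>z. (\<rho> / 2 + 1 / (2 * \<eta>)) * (norm z)\<^sup>2 + inner (g - \<rho> *\<^sub>R u - (1 / \<eta>) *\<^sub>R z\<^sub>t) z
          + (\<rho> / 2 * (norm u)\<^sup>2 + 1 / (2 * \<eta>) * (norm z\<^sub>t)\<^sup>2))"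
  proof
    fix z
    have shift: "w - z + (1 / \<rho>) *\<^sub>R (lam - \<xi>) = u - z"
      by (simp add: u_def algebra_simps)
    show "inner g z + \<rho> / 2 * (norm (w - z + (1 / \<rho>) *\<^sub>R (lam - \<xi>)))\<^sup>2
          + 1 / (2 * \<eta>) * (norm (z - z\<^sub>t))\<^sup>2
        = (\<rho> / 2 + 1 / (2 * \<eta>)) * (norm z)\<^sup>2 + inner (g - \<rho> *\<^sub>R u - (1 / \<eta>) *\<^sub>R z\<^sub>t) z
          + (\<rho> / 2 * (norm u)\<^sup>2 + 1 / (2 * \<eta>) * (norm z\<^sub>t)\<^sup>2)"
      unfolding shift linear_plus_squared_dists_eq by simp
  qed
qed

lemma strictly_midpoint_convex_quadratic:
  fixes p :: "'a::real_inner"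
  assumes "c > 0"
  shows "strictly_midpoint_convex (\<lambda>z. c * (norm z)\<^sup>2 + inner p z + k)"
  unfolding strictly_midpoint_convex_def
proof (intro allI impI)
  fix a b :: 'a assume "a \<noteq> b"
  have "c * (norm (midpoint a b))\<^sup>2 = c * (norm a)\<^sup>2 / 2 + c * (norm b)\<^sup>2 / 2 - c * (norm (a - b))\<^sup>2 / 4"
    by (simp add: midpoint_def power2_norm_eq_inner inner_add_left inner_add_right inner_diff_left
        inner_diff_right inner_commute field_simps)
  moreover have "inner p (midpoint a b) = (inner p a + inner p b) / 2"
    by (simp add: midpoint_def inner_add_right)
  moreover have "0 < c * (norm (a - b))\<^sup>2" using \<open>a \<noteq> b\<close> assms by simp
  ultimately show "c * (norm (midpoint a b))\<^sup>2 + inner p (midpoint a b) + k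
      < (c * (norm a)\<^sup>2 + inner p a + k + (c * (norm b)\<^sup>2 + inner p b + k)) / 2"
    by argo
qed

lemma bounded_sublevel_quadratic:
  fixes p :: "'a::real_inner"
  assumes "c > 0"
  shows "bounded {z. c * (norm z)\<^sup>2 + inner p z + k \<le> B}"
proof -
  define R where "R = (norm p + \<bar>B - k\<bar>) / c"
  have "norm z \<le> 1 + R" if "c * (norm z)\<^sup>2 + inner p z + k \<le> B" for z
  proof (rule ccontr)
    assume far: "\<not> norm z \<le> 1 + R"
    have "0 \<le> R" using assms by (simp add: R_def)
    have "- (norm p * norm z) \<le> inner p z"
      using Cauchy_Schwarz_ineq2[of p z] by linarith
    have "c * norm z * (1 + R) \<le> c * (norm z)\<^sup>2"
      using far assms \<open>0 \<le> R\<close> by (simp add: power2_eq_square mult_left_mono)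
    moreover have "c * norm z * (1 + R) = c * norm z + norm p * norm z + norm z * \<bar>B - k\<bar>"
      using assms by (simp add: R_def field_simps)
    moreover have "\<bar>B - k\<bar> \<le> norm z * \<bar>B - k\<bar>"
      using far \<open>0 \<le> R\<close> mult_right_mono[of 1 "norm z" "\<bar>B - k\<bar>"] by simp
    moreover have "0 < c * norm z"
      using far \<open>0 \<le> R\<close> assms by (intro mult_pos_pos) auto
    ultimately show False
      using that \<open>- (norm p * norm z) \<le> inner p z\<close> by linarith
  qed
  then show ?thesis by (auto simp: bounded_iff)
qed

lemma has_real_derivative_along_line:
  fixes h :: "'a::real_normed_vector \<Rightarrow> real"
  assumes "(h has_derivative D) (at x)"
  shows "((\<lambda>t. h (x + t *\<^sub>R v)) has_real_derivative D v) (at 0)"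
proof -
  have "((\<lambda>t. x + t *\<^sub>R v) has_derivative (\<lambda>t. t *\<^sub>R v)) (at 0)"
    by (auto intro!: derivative_eq_intros)
  moreover have "(h has_derivative D) (at (x + 0 *\<^sub>R v))"
    using assms by simp
  ultimately have "((\<lambda>t. h (x + t *\<^sub>R v)) has_derivative (\<lambda>t. D (t *\<^sub>R v))) (at 0)"
    by (rule has_derivative_compose)
  moreover have "(\<lambda>t. D (t *\<^sub>R v)) = (\<lambda>t. D v * t)"
    using has_derivative_linear[OF assms] by (simp add: linear_scale mult.commute)
  ultimately show ?thesis
    by (simp add: has_field_derivative_def)
qed

lemma convex_on_along_line:
  fixes h :: "'a::real_vector \<Rightarrow> real"
  assumes "convex_on UNIV h"
  shows "convex_on UNIV (\<lambda>t::real. h (x + t *\<^sub>R v))"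
proof (rule convex_onI)
  fix t s u :: real assume "0 < t" "t < 1"
  have "x + ((1 - t) * s + t * u) *\<^sub>R v = (1 - t) *\<^sub>R (x + s *\<^sub>R v) + t *\<^sub>R (x + u *\<^sub>R v)"
    by (simp add: algebra_simps)
  then show "h (x + ((1 - t) *\<^sub>R s + t *\<^sub>R u) *\<^sub>R v) \<le> (1 - t) * h (x + s *\<^sub>R v) + t * h (x + u *\<^sub>R v)"
    using convex_onD[OF assms, of t] \<open>0 < t\<close> \<open>t < 1\<close> by simp
qed simp

lemma convex_on_above_tangent:
  fixes h :: "'a::real_normed_vector \<Rightarrow> real"
  assumes "convex_on UNIV h" "(h has_derivative D) (at x)"
  shows "h x + D (z - x) \<le> h z"
proof -
  have "D (z - x) * (1 - 0) \<le> h (x + 1 *\<^sub>R (z - x)) - h (x + 0 *\<^sub>R (z - x))"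
    using has_real_derivative_along_line[OF assms(2), of "z - x"]
    by (intro convex_on_imp_above_tangent[OF convex_on_along_line[OF assms(1)]]) auto
  then show ?thesis by simp
qed

lemma tendsto_plus_inverse_scaleR_at_top:
  fixes x v :: "'a::real_normed_vector"
  shows "((\<lambda>l. x + inverse l *\<^sub>R v) \<longlongrightarrow> x) at_top"
  using tendsto_add[OF tendsto_const tendsto_scaleR[OF tendsto_inverse_0_at_top[OF filterlim_ident]
        tendsto_const], of x v]
  by (simp only: scale_zero_left add_0_right)

lemma asymptotically_optimal_tendsto:
  fixes \<Phi> :: "'a::metric_space \<Rightarrow> real" and h :: "'i \<Rightarrow> 'a \<Rightarrow> real" and z :: "'b \<Rightarrow> 'a"
  assumes "finite I" "continuous_on UNIV \<Phi>" "\<And>m. m \<in> I \<Longrightarrow> continuous_on UNIV (h m)"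
    and unique: "\<And>k. \<forall>m\<in>I. h m k \<le> 0 \<Longrightarrow> \<Phi> k \<le> \<Phi> x \<Longrightarrow> k = x"
    and "compact K" and in_K: "eventually (\<lambda>l. z l \<in> K) F"
    and feasible: "\<And>\<epsilon>. \<epsilon> > 0 \<Longrightarrow> eventually (\<lambda>l. \<forall>m\<in>I. h m (z l) < \<epsilon>) F"
    and optimal: "\<And>\<delta>. \<delta> > 0 \<Longrightarrow> eventually (\<lambda>l. \<Phi> (z l) < \<Phi> x + \<delta>) F"
  shows "(z \<longlongrightarrow> x) F"
  unfolding tendsto_iff
proof (intro allI impI)
  fix \<epsilon> :: real assume "\<epsilon> > 0"
  define K' where "K' = K \<inter> {y. \<epsilon> \<le> dist y x}"
  show "eventually (\<lambda>l. dist (z l) x < \<epsilon>) F"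
  proof (cases "K' = {}")
    case True
    from in_K show ?thesis
      by eventually_elim (use True in \<open>auto simp: K'_def\<close>)
  next
    case False
    \<comment> \<open>\<psi> is positive on the compact set K' by uniqueness of x, while \<psi> (z l) \<longrightarrow> 0.\<close>
    define \<psi> where "\<psi> y = max (\<Phi> y - \<Phi> x) (\<Sum>m\<in>I. max (h m y) 0)" for y
    have "compact K'"
      unfolding K'_def using \<open>compact K\<close>
      by (intro compact_Int_closed closed_Collect_le continuous_intros)
    moreover have "continuous_on K' \<psi>"
      unfolding \<psi>_def using assms(2,3)
      by (intro continuous_intros) (auto intro: continuous_on_subset)
    ultimately obtain k where k: "k \<in> K'" "\<And>y. y \<in> K' \<Longrightarrow> \<psi> k \<le> \<psi> y"
      using continuous_attains_inf[OF _ False] by metis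
    have "\<psi> k > 0"
    proof (rule ccontr)
      assume "\<not> \<psi> k > 0"
      then have "\<Phi> k \<le> \<Phi> x" and "(\<Sum>m\<in>I. max (h m k) 0) = 0"
        by (auto simp: \<psi>_def intro!: antisym sum_nonneg)
      moreover have "\<forall>m\<in>I. h m k \<le> 0"
        using calculation(2) \<open>finite I\<close> by (subst (asm) sum_nonneg_eq_0_iff) auto
      ultimately have "k = x" using unique by blast
      then show False using k(1) \<open>\<epsilon> > 0\<close> by (simp add: K'_def)
    qed
    define \<gamma> where "\<gamma> = \<psi> k / (card I + 1)"
    have "\<gamma> > 0" using \<open>\<psi> k > 0\<close> by (simp add: \<gamma>_def)
    from in_K feasible[OF this] optimal[OF \<open>\<psi> k > 0\<close>] show ?thesis
    proof eventually_elim
      case (elim l)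
      have "(\<Sum>m\<in>I. max (h m (z l)) 0) \<le> card I * \<gamma>"
        using elim(2) \<open>\<gamma> > 0\<close> sum_bounded_above[of I "\<lambda>m. max (h m (z l)) 0" \<gamma>] by fastforce
      also have "\<dots> < \<psi> k"
        using \<open>\<psi> k > 0\<close> by (simp add: \<gamma>_def field_simps)
      finally have "\<psi> (z l) < \<psi> k"
        using elim(3) by (simp add: \<psi>_def)
      then show ?case using k(2) elim(1) by (force simp: K'_def)
    qed
  qed
qed

locale softplus_penalty =
  fixes \<Phi> :: "'a::euclidean_space \<Rightarrow> real"
    and h :: "'i \<Rightarrow> 'a \<Rightarrow> real"
    and I :: "'i set"
  assumes finite_I: "finite I"
    and Phi_continuous: "continuous_on UNIV \<Phi>"
    and Phi_strictly_midpoint_convex: "strictly_midpoint_convex \<Phi>"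
    and Phi_sublevel_bounded: "\<And>B. bounded {z. \<Phi> z \<le> B}"
    and h_convex: "\<And>m. m \<in> I \<Longrightarrow> convex_on UNIV (h m)"
    and h_differentiable: "\<And>m x. m \<in> I \<Longrightarrow> h m differentiable (at x)"
    and feasible_nonempty: "{z. \<forall>m\<in>I. h m z \<le> 0} \<noteq> {}"
begin

definition feasible :: "'a set" where
  "feasible = {z. \<forall>m\<in>I. h m z \<le> 0}"

definition penalty :: "real \<Rightarrow> 'a \<Rightarrow> real" where
  "penalty l z = (\<Sum>m\<in>I. softplus (l * h m z))"

definition constrained_min :: 'a where
  "constrained_min = argmin_on feasible \<Phi>"

definition penalized_min :: "real \<Rightarrow> 'a" where
  "penalized_min l = argmin_on UNIV (\<lambda>z. \<Phi> z + penalty l z)"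

lemma h_continuous: "m \<in> I \<Longrightarrow> continuous_on UNIV (h m)"
  using h_differentiable by (intro differentiable_imp_continuous_on) (auto simp: differentiable_on_def)

lemma closed_feasible: "closed feasible"
proof -
  have "feasible = (\<Inter>m\<in>I. {z. h m z \<le> 0})"
    by (auto simp: feasible_def)
  then show ?thesis
    by (simp add: closed_INT closed_Collect_le h_continuous)
qed

lemma convex_feasible: "convex feasible"
  unfolding convex_alt
proof (intro ballI allI impI)
  fix x y and u :: real
  assume "x \<in> feasible" "y \<in> feasible" "0 \<le> u \<and> u \<le> 1"
  have "h m ((1 - u) *\<^sub>R x + u *\<^sub>R y) \<le> 0" if "m \<in> I" for m
  proof -
    have "h m ((1 - u) *\<^sub>R x + u *\<^sub>R y) \<le> (1 - u) * h m x + u * h m y"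
      using convex_onD[OF h_convex[OF that]] \<open>0 \<le> u \<and> u \<le> 1\<close> by simp
    moreover have "(1 - u) * h m x \<le> 0" "u * h m y \<le> 0"
      using \<open>x \<in> feasible\<close> \<open>y \<in> feasible\<close> \<open>0 \<le> u \<and> u \<le> 1\<close> that
      by (auto simp: feasible_def intro: mult_nonneg_nonpos)
    ultimately show ?thesis by linarith
  qed
  then show "(1 - u) *\<^sub>R x + u *\<^sub>R y \<in> feasible"
    by (simp add: feasible_def)
qed

lemma
  shows constrained_min_feasible: "constrained_min \<in> feasible"
    and constrained_min_le: "\<And>y. y \<in> feasible \<Longrightarrow> \<Phi> constrained_min \<le> \<Phi> y"
proof -
  obtain z\<^sub>0 where "z\<^sub>0 \<in> feasible"
    using feasible_nonempty by (auto simp: feasible_def)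
  then obtain z where z: "z \<in> feasible" "\<And>y. y \<in> feasible \<Longrightarrow> \<Phi> z \<le> \<Phi> y"
    using continuous_attains_inf_sublevel[OF Phi_continuous closed_feasible _ Phi_sublevel_bounded]
    by blast
  moreover have "constrained_min = z"
    unfolding constrained_min_def
    by (rule argmin_on_eqI[OF Phi_strictly_midpoint_convex convex_feasible z])
  ultimately show "constrained_min \<in> feasible" "\<And>y. y \<in> feasible \<Longrightarrow> \<Phi> constrained_min \<le> \<Phi> y"
    by auto
qed

lemma constrained_min_unique: "k \<in> feasible \<Longrightarrow> \<Phi> k \<le> \<Phi> constrained_min \<Longrightarrow> k = constrained_min"
  by (rule strictly_midpoint_convex_min_unique[OF Phi_strictly_midpoint_convex convex_feasible
        constrained_min_feasible constrained_min_le])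

lemma penalty_nonneg: "0 \<le> penalty l z"
  unfolding penalty_def by (intro sum_nonneg softplus_nonneg)

lemma continuous_on_penalty: "continuous_on UNIV (penalty l)"
  unfolding penalty_def by (intro continuous_intros h_continuous) auto

lemma penalty_midpoint_le:
  assumes "0 \<le> l"
  shows "penalty l (midpoint a b) \<le> (penalty l a + penalty l b) / 2"
proof -
  have "softplus (l * h m (midpoint a b)) \<le> (softplus (l * h m a) + softplus (l * h m b)) / 2"
    if "m \<in> I" for m
  proof -
    have "h m (midpoint a b) \<le> (h m a + h m b) / 2"
      using convex_onD[OF h_convex[OF that], of "1/2" a b] by (simp add: midpoint_def scaleR_right_distrib)
    then have "l * h m (midpoint a b) \<le> l * ((h m a + h m b) / 2)"
      using assms by (rule mult_left_mono)
    then have "l * h m (midpoint a b) \<le> (l * h m a + l * h m b) / 2"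
      by (simp add: distrib_left)
    then show ?thesis
      using softplus_mono softplus_midpoint_le order_trans by blast
  qed
  then have "penalty l (midpoint a b) \<le> (\<Sum>m\<in>I. (softplus (l * h m a) + softplus (l * h m b)) / 2)"
    unfolding penalty_def by (rule sum_mono)
  also have "\<dots> = (penalty l a + penalty l b) / 2"
    by (simp add: penalty_def sum.distrib flip: sum_divide_distrib)
  finally show ?thesis .
qed

lemma strictly_midpoint_convex_penalized:
  "0 \<le> l \<Longrightarrow> strictly_midpoint_convex (\<lambda>z. \<Phi> z + penalty l z)"
  unfolding strictly_midpoint_convex_def
proof (intro allI impI)
  fix a b :: 'a assume "0 \<le> l" "a \<noteq> b"
  then have "\<Phi> (midpoint a b) < (\<Phi> a + \<Phi> b) / 2"
    using Phi_strictly_midpoint_convex by (simp add: strictly_midpoint_convex_def)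
  moreover have "penalty l (midpoint a b) \<le> (penalty l a + penalty l b) / 2"
    using \<open>0 \<le> l\<close> by (rule penalty_midpoint_le)
  ultimately show "\<Phi> (midpoint a b) + penalty l (midpoint a b)
      < (\<Phi> a + penalty l a + (\<Phi> b + penalty l b)) / 2"
    by argo
qed

lemma penalized_min_le:
  assumes "0 \<le> l"
  shows "\<Phi> (penalized_min l) + penalty l (penalized_min l) \<le> \<Phi> y + penalty l y"
proof -
  let ?F = "\<lambda>z. \<Phi> z + penalty l z"
  have "{z. ?F z \<le> ?F 0} \<subseteq> {z. \<Phi> z \<le> ?F 0}"
    by (intro Collect_mono) (metis le_add_same_cancel1 order.trans penalty_nonneg)
  then have "bounded {z. ?F z \<le> ?F 0}"
    using Phi_sublevel_bounded bounded_subset by blast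
  then obtain z where z: "\<And>y. ?F z \<le> ?F y"
    using continuous_attains_inf_sublevel[of ?F UNIV 0] Phi_continuous continuous_on_penalty
    by (metis UNIV_I closed_UNIV continuous_on_add)
  moreover have "penalized_min l = z"
    unfolding penalized_min_def
    by (rule argmin_on_eqI[OF strictly_midpoint_convex_penalized[OF assms] convex_UNIV UNIV_I z])
  ultimately show ?thesis by simp
qed

lemma penalty_feasible_le:
  assumes "0 \<le> l" "z \<in> feasible"
  shows "penalty l z \<le> card I * ln 2"
proof -
  have "softplus (l * h m z) \<le> ln 2" if "m \<in> I" for m
    using assms that by (intro softplus_nonpos_le_ln2 mult_nonneg_nonpos) (auto simp: feasible_def)
  then show ?thesis
    unfolding penalty_def using sum_bounded_above[of I "\<lambda>m. softplus (l * h m z)" "ln 2"] by simp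
qed

lemma penalized_min_le_constrained_min:
  "0 \<le> l \<Longrightarrow> \<Phi> (penalized_min l) + penalty l (penalized_min l) \<le> \<Phi> constrained_min + card I * ln 2"
  using penalized_min_le[of l constrained_min] penalty_feasible_le[OF _ constrained_min_feasible]
  by force

lemma Phi_penalized_min_le:
  "0 \<le> l \<Longrightarrow> \<Phi> (penalized_min l) \<le> \<Phi> constrained_min + card I * ln 2"
  using penalized_min_le_constrained_min[of l] penalty_nonneg[of l "penalized_min l"] by linarith

lemma compact_Phi_sublevel: "compact {z. \<Phi> z \<le> B}"
  using Phi_sublevel_bounded closed_Collect_le[OF Phi_continuous continuous_on_const]
  by (simp add: compact_eq_bounded_closed)

lemma Phi_bounded_below:
  obtains c where "\<And>z. c \<le> \<Phi> z"
proof -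
  obtain z where "\<And>y. \<Phi> z \<le> \<Phi> y"
    using continuous_attains_inf_sublevel[OF Phi_continuous closed_UNIV UNIV_I Phi_sublevel_bounded]
    by (metis UNIV_I)
  then show thesis by (rule that)
qed

lemma eventually_penalized_min_almost_feasible:
  assumes "\<epsilon> > 0"
  shows "eventually (\<lambda>l. \<forall>m\<in>I. h m (penalized_min l) < \<epsilon>) at_top"
proof -
  obtain c where c: "\<And>z. c \<le> \<Phi> z" using Phi_bounded_below by blast
  define C where "C = \<Phi> constrained_min + card I * ln 2 - c"
  have violation_le: "l * h m (penalized_min l) \<le> C" if "0 \<le> l" "m \<in> I" for l m
  proof -
    have "l * h m (penalized_min l) \<le> softplus (l * h m (penalized_min l))"
      by (rule softplus_ge)
    also have "\<dots> \<le> penalty l (penalized_min l)"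
      unfolding penalty_def using finite_I that(2)
      by (intro member_le_sum) (auto intro: softplus_nonneg)
    also have "\<dots> \<le> C"
      using penalized_min_le_constrained_min[OF that(1)] c[of "penalized_min l"] by (simp add: C_def)
    finally show ?thesis .
  qed
  show ?thesis
    using eventually_gt_at_top[of "\<bar>C\<bar> / \<epsilon>"]
  proof eventually_elim
    case (elim l)
    then have "0 < l" "\<bar>C\<bar> < l * \<epsilon>"
      using assms by (auto simp: pos_divide_less_eq mult.commute intro: le_less_trans[OF _ elim])
    then have "l * h m (penalized_min l) < l * \<epsilon>" if "m \<in> I" for m
      using violation_le[OF less_imp_le[OF \<open>0 < l\<close>] that] abs_ge_self[of C] by linarith
    then show ?case using \<open>0 < l\<close> by (simp add: mult_less_cancel_left_pos)
  qed
qed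

definition active :: "'i set" where
  "active = {m\<in>I. h m constrained_min = 0}"

definition Dh :: "'i \<Rightarrow> 'a \<Rightarrow> real" where
  "Dh m = frechet_derivative (h m) (at constrained_min)"

definition ray_penalty :: "'a \<Rightarrow> real" where
  "ray_penalty v = (\<Sum>m\<in>active. softplus (Dh m v))"

lemma h_has_derivative: "m \<in> I \<Longrightarrow> (h m has_derivative Dh m) (at constrained_min)"
  unfolding Dh_def using h_differentiable frechet_derivative_works by blast

lemma ray_penalty_le_penalty:
  assumes "0 < l"
  shows "ray_penalty (l *\<^sub>R (z - constrained_min)) \<le> penalty l z"
proof -
  have "softplus (Dh m (l *\<^sub>R (z - constrained_min))) \<le> softplus (l * h m z)" if "m \<in> active" for m
  proof -
    have m: "m \<in> I" "h m constrained_min = 0"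
      using that by (auto simp: active_def)
    have "Dh m (z - constrained_min) \<le> h m z"
      using convex_on_above_tangent[OF h_convex h_has_derivative, OF m(1) m(1)] m(2) by simp
    then have "Dh m (l *\<^sub>R (z - constrained_min)) \<le> l * h m z"
      using linear_scale[OF has_derivative_linear[OF h_has_derivative[OF m(1)]]] assms
      by (simp add: mult_left_mono)
    then show ?thesis by (rule softplus_mono)
  qed
  then have "ray_penalty (l *\<^sub>R (z - constrained_min)) \<le> (\<Sum>m\<in>active. softplus (l * h m z))"
    unfolding ray_penalty_def by (rule sum_mono)
  also have "\<dots> \<le> penalty l z"
    unfolding penalty_def using finite_I
    by (intro sum_mono2) (auto simp: active_def intro: softplus_nonneg)
  finally show ?thesis .
qed

lemma active_term_tendsto:
  assumes "m \<in> active"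
  shows "((\<lambda>l. l * h m (constrained_min + inverse l *\<^sub>R v)) \<longlongrightarrow> Dh m v) at_top"
proof -
  have m: "m \<in> I" "h m constrained_min = 0"
    using assms by (auto simp: active_def)
  have "((\<lambda>t. h m (constrained_min + t *\<^sub>R v) / t) \<longlongrightarrow> Dh m v) (at 0)"
    using has_real_derivative_along_line[OF h_has_derivative[OF m(1)], of v] m(2)
    by (simp add: DERIV_def)
  moreover have "filterlim inverse (at (0::real)) at_top"
    using filterlim_inverse_at_right_top filterlim_mono at_within_le_at by blast
  ultimately have "((\<lambda>l. h m (constrained_min + inverse l *\<^sub>R v) / inverse l) \<longlongrightarrow> Dh m v) at_top"
    by (rule filterlim_compose)
  then show ?thesis by (simp add: divide_inverse mult.commute)
qed

lemma inactive_term_tendsto: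
  assumes "m \<in> I - active"
  shows "((\<lambda>l. softplus (l * h m (constrained_min + inverse l *\<^sub>R v))) \<longlongrightarrow> 0) at_top"
proof -
  have "m \<in> I" "h m constrained_min \<noteq> 0"
    using assms by (auto simp: active_def)
  then have "h m constrained_min < 0"
    using constrained_min_feasible by (simp add: feasible_def less_le)
  have "((\<lambda>l. h m (constrained_min + inverse l *\<^sub>R v)) \<longlongrightarrow> h m constrained_min) at_top"
    using tendsto_plus_inverse_scaleR_at_top
    by (rule isCont_tendsto_compose[OF has_derivative_continuous[OF h_has_derivative[OF \<open>m \<in> I\<close>]]])
  then have "filterlim (\<lambda>l. h m (constrained_min + inverse l *\<^sub>R v) * l) at_bot at_top"
    using \<open>h m constrained_min < 0\<close> filterlim_ident by (rule filterlim_tendsto_neg_mult_at_bot)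
  from softplus_tendsto_0_at_bot[OF this] show ?thesis
    by (simp add: mult.commute)
qed

lemma penalty_along_ray_tendsto:
  "((\<lambda>l. penalty l (constrained_min + inverse l *\<^sub>R v)) \<longlongrightarrow> ray_penalty v) at_top"
proof -
  have "active \<subseteq> I" by (auto simp: active_def)
  then have split: "penalty l z = (\<Sum>m\<in>active. softplus (l * h m z)) + (\<Sum>m\<in>I - active. softplus (l * h m z))"
    for l z
    unfolding penalty_def using finite_I by (simp add: sum.subset_diff)
  have "((\<lambda>l. (\<Sum>m\<in>active. softplus (l * h m (constrained_min + inverse l *\<^sub>R v)))
      + (\<Sum>m\<in>I - active. softplus (l * h m (constrained_min + inverse l *\<^sub>R v))))
      \<longlongrightarrow> ray_penalty v + (\<Sum>m\<in>I - active. 0)) at_top"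
    unfolding ray_penalty_def
    by (intro tendsto_add tendsto_sum tendsto_softplus active_term_tendsto inactive_term_tendsto)
  then show ?thesis by (simp add: split)
qed

lemma eventually_Phi_penalized_min_less:
  assumes "\<delta> > 0"
  shows "eventually (\<lambda>l. \<Phi> (penalized_min l) < \<Phi> constrained_min + \<delta>) at_top"
proof -
  define c where "c = Inf (range ray_penalty)"
  have c_le: "c \<le> ray_penalty u" for u
    unfolding c_def ray_penalty_def
    by (rule cInf_lower) (auto intro!: bdd_belowI[of _ 0] sum_nonneg softplus_nonneg)
  obtain v where v: "ray_penalty v < c + \<delta> / 2"
    using cInf_lessD[of "range ray_penalty" "c + \<delta> / 2"] assms unfolding c_def by auto
  let ?y = "\<lambda>l. constrained_min + inverse l *\<^sub>R v"
  have "((\<lambda>l. \<Phi> (?y l)) \<longlongrightarrow> \<Phi> constrained_min) at_top"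
    using tendsto_plus_inverse_scaleR_at_top
    by (rule continuous_on_tendsto_compose[OF Phi_continuous]) auto
  then have "((\<lambda>l. \<Phi> (?y l) + penalty l (?y l)) \<longlongrightarrow> \<Phi> constrained_min + ray_penalty v) at_top"
    using penalty_along_ray_tendsto by (rule tendsto_add)
  then have "eventually (\<lambda>l. \<Phi> (?y l) + penalty l (?y l) < \<Phi> constrained_min + ray_penalty v + \<delta> / 2) at_top"
    using assms by (intro order_tendstoD(2)) auto
  then show ?thesis
    using eventually_gt_at_top[of 0]
  proof eventually_elim
    case (elim l)
    have "\<Phi> (penalized_min l) + c \<le> \<Phi> (penalized_min l) + penalty l (penalized_min l)"
      using c_le ray_penalty_le_penalty[OF \<open>0 < l\<close>] by (meson add_left_mono order_trans)
    also have "\<dots> \<le> \<Phi> (?y l) + penalty l (?y l)"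
      using \<open>0 < l\<close> by (intro penalized_min_le) simp
    finally show ?case
      using elim v by linarith
  qed
qed

theorem penalized_min_tendsto: "(penalized_min \<longlongrightarrow> constrained_min) at_top"
proof (rule asymptotically_optimal_tendsto[OF finite_I Phi_continuous h_continuous _ compact_Phi_sublevel])
  show "k = constrained_min" if "\<forall>m\<in>I. h m k \<le> 0" "\<Phi> k \<le> \<Phi> constrained_min" for k
    using that constrained_min_unique by (simp add: feasible_def)
  show "eventually (\<lambda>l. penalized_min l \<in> {z. \<Phi> z \<le> \<Phi> constrained_min + card I * ln 2}) at_top"
    using eventually_ge_at_top[of 0] by eventually_elim (simp add: Phi_penalized_min_le)
qed (use eventually_penalized_min_almost_feasible eventually_Phi_penalized_min_less in auto)

end

theorem proposition1:
  fixes f :: "real^'k^'j \<Rightarrow> real"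
    and g w lam z\<^sub>t \<xi> :: "real^'k^'j"
    and \<rho> \<eta> :: real
    and M :: nat
    and h :: "nat \<Rightarrow> real^'k^'j \<Rightarrow> real"
    and W :: "(real^'k^'j) set"
    and \<Phi> :: "real^'k^'j \<Rightarrow> real"
  assumes f_convex: "convex_on UNIV f"
    and g_subgrad: "is_subgradient f z\<^sub>t g"
    and rho_pos: "\<rho> > 0" and eta_pos: "\<eta> > 0"
    and h_convex: "\<And>m. m \<in> {1..M} \<Longrightarrow> convex_on UNIV (h m)"
    and h_C2: "\<And>m. m \<in> {1..M} \<Longrightarrow> twice_cont_diff (h m)"
    and W_def: "W = {z. \<forall>m\<in>{1..M}. h m z \<le> 0}"
    and W_compact: "compact W" and W_convex: "convex W" and W_nonempty: "W \<noteq> {}"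
    and Phi_def: "\<Phi> = (\<lambda>z. inner g z
        + \<rho> / 2 * (norm (w - z + (1 / \<rho>) *\<^sub>R (lam - \<xi>)))\<^sup>2
        + 1 / (2 * \<eta>) * (norm (z - z\<^sub>t))\<^sup>2)"
  shows "((\<lambda>l. argmin_on UNIV (\<lambda>z. \<Phi> z + (\<Sum>m=1..M. ln (1 + exp (l * h m z)))))
           \<longlongrightarrow> argmin_on W \<Phi>) at_top"
proof -
  obtain c p k where "c > 0" and Phi_quadratic: "\<Phi> = (\<lambda>z. c * (norm z)\<^sup>2 + inner p z + k)"
    using proximal_objective_quadratic[OF rho_pos eta_pos] unfolding Phi_def by blast
  interpret softplus_penalty \<Phi> h "{1..M}"
  proof
    show "continuous_on UNIV \<Phi>"
      unfolding Phi_quadratic by (intro continuous_intros)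
    show "strictly_midpoint_convex \<Phi>"
      unfolding Phi_quadratic using \<open>c > 0\<close> by (rule strictly_midpoint_convex_quadratic)
    show "bounded {z. \<Phi> z \<le> B}" for B
      unfolding Phi_quadratic using \<open>c > 0\<close> by (rule bounded_sublevel_quadratic)
    show "h m differentiable (at x)" if "m \<in> {1..M}" for m x
      using h_C2[OF that] unfolding twice_cont_diff_def differentiable_def by blast
    show "{z. \<forall>m\<in>{1..M}. h m z \<le> 0} \<noteq> {}"
      using W_def W_nonempty by simp
  qed (use h_convex in auto)
  have "feasible = W"
    unfolding feasible_def W_def ..
  with penalized_min_tendsto show ?thesis
    unfolding penalized_min_def penalty_def softplus_def constrained_min_def by simp
qed

end
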